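(* Let $\mathcal{P}$ be a filtered meet-semilattice and $F\colon\mathcal{P}\to\mathrm{SSets}$ a weak Mackey functor with a quasi-unit. Then $F$ is cofibrant, i.e. the natural map of simplicial sets $\operatorname{colim}_{\mathcal{P}_{<i}}F\to F(i)$ is (degreewise) injective for every $i\in\mathcal{P}$.
   Context: A filtered meet-semilattice is a poset in which any two elements $j,k$ have a meet $j\wedge k$, equipped with $d\colon\mathcal{P}\to\mathbb{N}$ with $d(i)<d(j)$ whenever $i<j$. (Cofibrant refers to the Reedy model structure on $\operatorname{Fun}(\mathcal{P},\mathrm{SSets})$, in which a functor is cofibrant exactly when these natural maps are injective.) $F(j<i)$ is the image of the arrow $j\to i$; $F(i<i)$ and $G(i<i)$ are identities. A weak Mackey functor $F\colon\mathcal{P}\to\mathrm{SSets}$ is a covariant functor with maps $G(j<i)\colon F(i)\to F(j)$ for $j<i$ such that for all $j<i,k<i$ there are $\alpha(i,j,k)\in\operatorname{End}(F(j))$, $\beta(i,j,k)\in\operatorname{End}(F(k\wedge j))$ with $G(j<i)\circ F(k<i)=\alpha(i,j,k)\circ F(k\wedge j<j)\circ G(k\wedge j<k)=F(k\wedge j<j)\circ\beta(i,j,k)\circ G(k\wedge j<k)$; it has a quasi-unit if $\alpha(i,j,j)$ is an automorphism of $F(j)$ for all $j<i$. *)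

theory Defs
  imports Main
begin

record 'a sset =
  sx :: "nat \<Rightarrow> 'a set"
  sd :: "nat \<Rightarrow> nat \<Rightarrow> 'a \<Rightarrow> 'a"
  ss :: "nat \<Rightarrow> nat \<Rightarrow> 'a \<Rightarrow> 'a"

definition is_sset :: "'a sset \<Rightarrow> bool" where
  "is_sset X \<longleftrightarrow>
     (\<forall>n i x. x \<in> sx X (Suc n) \<longrightarrow> i \<le> Suc n \<longrightarrow> sd X n i x \<in> sx X n) \<and>
     (\<forall>n i x. x \<in> sx X n \<longrightarrow> i \<le> n \<longrightarrow> ss X n i x \<in> sx X (Suc n)) \<and>
     (\<forall>n i j x. x \<in> sx X (Suc (Suc n)) \<longrightarrow> i < j \<longrightarrow> j \<le> Suc (Suc n) \<longrightarrow>
        sd X n i (sd X (Suc n) j x) = sd X n (j - 1) (sd X (Suc n) i x)) \<and>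
     (\<forall>n i j x. x \<in> sx X n \<longrightarrow> j \<le> n \<longrightarrow> (i = j \<or> i = Suc j) \<longrightarrow>
        sd X n i (ss X n j x) = x) \<and>
     (\<forall>m i j x. x \<in> sx X (Suc m) \<longrightarrow> i < j \<longrightarrow> j \<le> Suc m \<longrightarrow>
        sd X (Suc m) i (ss X (Suc m) j x) = ss X m (j - 1) (sd X m i x)) \<and>
     (\<forall>m i j x. x \<in> sx X (Suc m) \<longrightarrow> Suc j < i \<longrightarrow> i \<le> Suc (Suc m) \<longrightarrow>
        sd X (Suc m) i (ss X (Suc m) j x) = ss X m j (sd X m (i - 1) x)) \<and>
     (\<forall>n i j x. x \<in> sx X n \<longrightarrow> i \<le> j \<longrightarrow> j \<le> n \<longrightarrow>
        ss X (Suc n) i (ss X n j x) = ss X (Suc n) (Suc j) (ss X n i x))"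

definition is_smap :: "'a sset \<Rightarrow> 'b sset \<Rightarrow> (nat \<Rightarrow> 'a \<Rightarrow> 'b) \<Rightarrow> bool" where
  "is_smap X Y f \<longleftrightarrow>
     (\<forall>n x. x \<in> sx X n \<longrightarrow> f n x \<in> sx Y n) \<and>
     (\<forall>n i x. x \<in> sx X (Suc n) \<longrightarrow> i \<le> Suc n \<longrightarrow> f n (sd X n i x) = sd Y n i (f (Suc n) x)) \<and>
     (\<forall>n i x. x \<in> sx X n \<longrightarrow> i \<le> n \<longrightarrow> f (Suc n) (ss X n i x) = ss Y n i (f n x))"

definition is_send :: "'a sset \<Rightarrow> (nat \<Rightarrow> 'a \<Rightarrow> 'a) \<Rightarrow> bool" where
  "is_send X f \<longleftrightarrow> is_smap X X f"

definition is_saut :: "'a sset \<Rightarrow> (nat \<Rightarrow> 'a \<Rightarrow> 'a) \<Rightarrow> bool" where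
  "is_saut X f \<longleftrightarrow> is_smap X X f \<and>
     (\<exists>g. is_smap X X g \<and> (\<forall>n x. x \<in> sx X n \<longrightarrow> g n (f n x) = x \<and> f n (g n x) = x))"

definition filtration :: "('p::semilattice_inf \<Rightarrow> nat) \<Rightarrow> bool" where
  "filtration d \<longleftrightarrow> (\<forall>i j::'p. i < j \<longrightarrow> d i < d j)"

text \<open>F i is the simplicial set at i; Fm j i n is the level-n component of F(j<=i).\<close>
definition is_sfunctor ::
  "('p::order \<Rightarrow> 'a sset) \<Rightarrow> ('p \<Rightarrow> 'p \<Rightarrow> nat \<Rightarrow> 'a \<Rightarrow> 'a) \<Rightarrow> bool" where
  "is_sfunctor F Fm \<longleftrightarrow>
     (\<forall>i. is_sset (F i)) \<and>
     (\<forall>j i. j \<le> i \<longrightarrow> is_smap (F j) (F i) (Fm j i)) \<and>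
     (\<forall>i n x. x \<in> sx (F i) n \<longrightarrow> Fm i i n x = x) \<and>
     (\<forall>j k l n x. j \<le> k \<longrightarrow> k \<le> l \<longrightarrow> x \<in> sx (F j) n \<longrightarrow>
        Fm k l n (Fm j k n x) = Fm j l n x)"

text \<open>Transfer maps G(j<i) : F(i) -> F(j), extended by G(i<i) = id.\<close>
definition Gx :: "('p \<Rightarrow> 'p \<Rightarrow> nat \<Rightarrow> 'a \<Rightarrow> 'a) \<Rightarrow> 'p \<Rightarrow> 'p \<Rightarrow> nat \<Rightarrow> 'a \<Rightarrow> 'a" where
  "Gx G j i n x = (if j = i then x else G j i n x)"

definition weak_mackey ::
  "('p::semilattice_inf \<Rightarrow> 'a sset) \<Rightarrow> ('p \<Rightarrow> 'p \<Rightarrow> nat \<Rightarrow> 'a \<Rightarrow> 'a) \<Rightarrow>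
   ('p \<Rightarrow> 'p \<Rightarrow> nat \<Rightarrow> 'a \<Rightarrow> 'a) \<Rightarrow>
   ('p \<Rightarrow> 'p \<Rightarrow> 'p \<Rightarrow> nat \<Rightarrow> 'a \<Rightarrow> 'a) \<Rightarrow> ('p \<Rightarrow> 'p \<Rightarrow> 'p \<Rightarrow> nat \<Rightarrow> 'a \<Rightarrow> 'a) \<Rightarrow> bool" where
  "weak_mackey F Fm G \<alpha> \<beta> \<longleftrightarrow>
     is_sfunctor F Fm \<and>
     (\<forall>j i. j < i \<longrightarrow> is_smap (F i) (F j) (G j i)) \<and>
     (\<forall>i j k. j < i \<longrightarrow> k < i \<longrightarrow>
        is_send (F j) (\<alpha> i j k) \<and> is_send (F (inf k j)) (\<beta> i j k) \<and>
        (\<forall>n x. x \<in> sx (F k) n \<longrightarrow>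
           Gx G j i n (Fm k i n x) = \<alpha> i j k n (Fm (inf k j) j n (Gx G (inf k j) k n x)) \<and>
           Gx G j i n (Fm k i n x) = Fm (inf k j) j n (\<beta> i j k n (Gx G (inf k j) k n x))))"

definition quasi_unit ::
  "('p::order \<Rightarrow> 'a sset) \<Rightarrow> ('p \<Rightarrow> 'p \<Rightarrow> 'p \<Rightarrow> nat \<Rightarrow> 'a \<Rightarrow> 'a) \<Rightarrow> bool" where
  "quasi_unit F \<alpha> \<longleftrightarrow> (\<forall>i j. j < i \<longrightarrow> is_saut (F j) (\<alpha> i j j))"

text \<open>The colimit of F over P_{<i} is computed levelwise; in level n it is the quotient of
  the disjoint union of the sets F(j)_n (j < i) by the equivalence relation generated by
  (j,x) ~ (l, F(j<=l) x) for j <= l < i.\<close>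

definition latch_dom :: "('p::order \<Rightarrow> 'a sset) \<Rightarrow> 'p \<Rightarrow> nat \<Rightarrow> ('p \<times> 'a) set" where
  "latch_dom F i n = {(j, x). j < i \<and> x \<in> sx (F j) n}"

definition latch_step ::
  "('p::order \<Rightarrow> 'a sset) \<Rightarrow> ('p \<Rightarrow> 'p \<Rightarrow> nat \<Rightarrow> 'a \<Rightarrow> 'a) \<Rightarrow> 'p \<Rightarrow> nat \<Rightarrow>
   ('p \<times> 'a) \<Rightarrow> ('p \<times> 'a) \<Rightarrow> bool" where
  "latch_step F Fm i n a b \<longleftrightarrow>
     (\<exists>j l x. a = (j, x) \<and> b = (l, Fm j l n x) \<and> j \<le> l \<and> l < i \<and> x \<in> sx (F j) n)"

definition latch_rel ::
  "('p::order \<Rightarrow> 'a sset) \<Rightarrow> ('p \<Rightarrow> 'p \<Rightarrow> nat \<Rightarrow> 'a \<Rightarrow> 'a) \<Rightarrow> 'p \<Rightarrow> nat \<Rightarrow> ('p \<times> 'a) rel" where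
  "latch_rel F Fm i n = {(a, b). equivclp (latch_step F Fm i n) a b}"

definition latch_obj ::
  "('p::order \<Rightarrow> 'a sset) \<Rightarrow> ('p \<Rightarrow> 'p \<Rightarrow> nat \<Rightarrow> 'a \<Rightarrow> 'a) \<Rightarrow> 'p \<Rightarrow> nat \<Rightarrow> ('p \<times> 'a) set set" where
  "latch_obj F Fm i n = latch_dom F i n // latch_rel F Fm i n"

definition latch_map ::
  "('p::order \<Rightarrow> 'p \<Rightarrow> nat \<Rightarrow> 'a \<Rightarrow> 'a) \<Rightarrow> 'p \<Rightarrow> nat \<Rightarrow> ('p \<times> 'a) set \<Rightarrow> 'a" where
  "latch_map Fm i n C = (THE y. \<exists>(j, x) \<in> C. y = Fm j i n x)"

definition reedy_cofibrant ::
  "('p::order \<Rightarrow> 'a sset) \<Rightarrow> ('p \<Rightarrow> 'p \<Rightarrow> nat \<Rightarrow> 'a \<Rightarrow> 'a) \<Rightarrow> bool" where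
  "reedy_cofibrant F Fm \<longleftrightarrow> (\<forall>i n. inj_on (latch_map Fm i n) (latch_obj F Fm i n))"

end

theory Submission
  imports Defs
begin

text \<open>The transfer maps give \<open>G(j<i) \<circ> F(j<i) = \<alpha>(i,j,j)\<close>, so a quasi-unit makes every
  \<open>F(j<i)\<close> injective. Combined with the Mackey formula for \<open>G(j<i) \<circ> F(k<i)\<close> and the
  invertibility of \<open>\<alpha>(k,m,m)\<close> for \<open>m = k \<sqinter> j\<close>, this shows that an element of \<open>F(j)\<close> having
  the same image in \<open>F(i)\<close> as an element of \<open>F(k)\<close> comes from \<open>F(m)\<close>. These two facts
  say that any two elements of the latching diagram with the same image in \<open>F(i)\<close> are
  zig-zag related through \<open>F(m)\<close>, i.e. the latching map is injective.\<close>

lemma sfunctor_map_in: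
  assumes "is_sfunctor F Fm" "j \<le> i" "x \<in> sx (F j) n"
  shows "Fm j i n x \<in> sx (F i) n"
  using assms unfolding is_sfunctor_def is_smap_def by blast

lemma sfunctor_id:
  assumes "is_sfunctor F Fm" "x \<in> sx (F i) n"
  shows "Fm i i n x = x"
  using assms unfolding is_sfunctor_def by blast

lemma sfunctor_comp:
  assumes "is_sfunctor F Fm" "j \<le> k" "k \<le> l" "x \<in> sx (F j) n"
  shows "Fm k l n (Fm j k n x) = Fm j l n x"
  using assms unfolding is_sfunctor_def by blast

lemma saut_inj_on:
  assumes "is_saut X f"
  shows "inj_on (f n) (sx X n)"
  using assms unfolding is_saut_def by (metis inj_onI)

lemma saut_surj_on:
  assumes "is_saut X f" "y \<in> sx X n"
  shows "\<exists>x \<in> sx X n. f n x = y"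
  using assms unfolding is_saut_def is_smap_def by metis

lemma equiv_latch_rel: "equiv UNIV (latch_rel F Fm i n)"
  unfolding latch_rel_def equiv_def refl_on_def sym_def trans_def
  by (auto intro: equivclp_sym equivclp_trans)

lemma latch_step_in_rel:
  assumes "j \<le> l" "l < i" "x \<in> sx (F j) n"
  shows "((j, x), (l, Fm j l n x)) \<in> latch_rel F Fm i n"
  using assms unfolding latch_rel_def latch_step_def by blast

lemma latch_rel_preserves_value:
  assumes sf: "is_sfunctor F Fm" and ab: "(a, b) \<in> latch_rel F Fm i n"
    and a: "a \<in> latch_dom F i n"
  shows "b \<in> latch_dom F i n \<and> Fm (fst b) i n (snd b) = Fm (fst a) i n (snd a)"
proof -
  have "equivclp (latch_step F Fm i n) a b" using ab unfolding latch_rel_def by simp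
  then show ?thesis
  proof (induction rule: equivclp_induct)
    case base
    show ?case using a by simp
  next
    case (step b c)
    from \<open>latch_step F Fm i n b c \<or> latch_step F Fm i n c b\<close>
    obtain j l x where "j \<le> l" "l < i" "x \<in> sx (F j) n"
      and "(b = (j, x) \<and> c = (l, Fm j l n x)) \<or> (c = (j, x) \<and> b = (l, Fm j l n x))"
      unfolding latch_step_def by blast
    then show ?case
      using step.IH sfunctor_map_in[OF sf] sfunctor_comp[OF sf] unfolding latch_dom_def by auto
  qed
qed

lemma latch_map_class:
  assumes sf: "is_sfunctor F Fm" and a: "a \<in> latch_dom F i n"
  shows "latch_map Fm i n (latch_rel F Fm i n `` {a}) = Fm (fst a) i n (snd a)"
  unfolding latch_map_def
proof (rule the_equality)
  show "\<exists>(j, x) \<in> latch_rel F Fm i n `` {a}. Fm (fst a) i n (snd a) = Fm j i n x"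
    by (rule bexI[of _ a]) (auto simp: latch_rel_def)
next
  fix y assume "\<exists>(j, x) \<in> latch_rel F Fm i n `` {a}. y = Fm j i n x"
  then show "y = Fm (fst a) i n (snd a)"
    using latch_rel_preserves_value[OF sf _ a] by fastforce
qed

lemma reedy_cofibrantI:
  assumes sf: "is_sfunctor F Fm"
    and rel: "\<And>i n j x k y. j < i \<Longrightarrow> k < i \<Longrightarrow> x \<in> sx (F j) n \<Longrightarrow> y \<in> sx (F k) n \<Longrightarrow>
        Fm j i n x = Fm k i n y \<Longrightarrow> ((j, x), (k, y)) \<in> latch_rel F Fm i n"
  shows "reedy_cofibrant F Fm"
  unfolding reedy_cofibrant_def
proof (intro allI inj_onI)
  fix i n C D
  assume "C \<in> latch_obj F Fm i n" "D \<in> latch_obj F Fm i n"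
    and CD: "latch_map Fm i n C = latch_map Fm i n D"
  then obtain j x k y where jx: "(j, x) \<in> latch_dom F i n" "C = latch_rel F Fm i n `` {(j, x)}"
    and ky: "(k, y) \<in> latch_dom F i n" "D = latch_rel F Fm i n `` {(k, y)}"
    unfolding latch_obj_def by (auto elim!: quotientE)
  have "Fm j i n x = Fm k i n y"
    using CD jx ky latch_map_class[OF sf] by fastforce
  with jx ky have "((j, x), (k, y)) \<in> latch_rel F Fm i n"
    unfolding latch_dom_def by (auto intro: rel)
  then show "C = D" using jx ky equiv_class_eq[OF equiv_latch_rel] by simp
qed

lemma reedy_cofibrant_if_inj_meet_images:
  fixes F :: "'p::semilattice_inf \<Rightarrow> 'a sset"
  assumes sf: "is_sfunctor F Fm"
    and inj: "\<And>j i n. j < i \<Longrightarrow> inj_on (Fm j i n) (sx (F j) n)"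
    and meet: "\<And>i j k n x y. j < i \<Longrightarrow> k < i \<Longrightarrow> x \<in> sx (F j) n \<Longrightarrow> y \<in> sx (F k) n \<Longrightarrow>
        Fm j i n x = Fm k i n y \<Longrightarrow> x \<in> Fm (inf k j) j n ` sx (F (inf k j)) n"
  shows "reedy_cofibrant F Fm"
proof (rule reedy_cofibrantI[OF sf])
  fix i n j x k y
  assume ji: "j < i" and ki: "k < i" and x: "x \<in> sx (F j) n" and y: "y \<in> sx (F k) n"
    and xy: "Fm j i n x = Fm k i n y"
  define m where "m = inf k j"
  have mj: "m \<le> j" and mk: "m \<le> k" unfolding m_def by auto
  have mi: "m < i" using mj ji by (rule le_less_trans)
  obtain w where w: "w \<in> sx (F m) n" and xw: "x = Fm m j n w"
    using meet[OF ji ki x y xy] unfolding m_def by blast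
  obtain w' where w': "w' \<in> sx (F m) n" and yw': "y = Fm m k n w'"
    using meet[OF ki ji y x xy[symmetric]] unfolding m_def by (auto simp: inf.commute)
  have "Fm m i n w = Fm m i n w'"
    using xy sfunctor_comp[OF sf mj ji[THEN less_imp_le] w]
      sfunctor_comp[OF sf mk ki[THEN less_imp_le] w'] by (simp add: xw yw')
  with inj[OF mi] w w' have "w = w'" by (auto dest: inj_onD)
  then have "((m, w), (j, x)) \<in> latch_rel F Fm i n" "((m, w), (k, y)) \<in> latch_rel F Fm i n"
    using latch_step_in_rel[where F = F, OF mj ji w] latch_step_in_rel[where F = F, OF mk ki w'] xw yw' by simp_all
  then show "((j, x), (k, y)) \<in> latch_rel F Fm i n"
    using equiv_latch_rel unfolding equiv_def sym_def trans_def by blast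
qed

lemma weak_mackey_sfunctor: "weak_mackey F Fm G \<alpha> \<beta> \<Longrightarrow> is_sfunctor F Fm"
  unfolding weak_mackey_def by blast

lemma weak_mackey_transfer_in:
  assumes "weak_mackey F Fm G \<alpha> \<beta>" "j < i" "x \<in> sx (F i) n"
  shows "G j i n x \<in> sx (F j) n"
  using assms unfolding weak_mackey_def is_smap_def by blast

lemma weak_mackey_formula:
  assumes "weak_mackey F Fm G \<alpha> \<beta>" "j < i" "k < i" "y \<in> sx (F k) n"
  shows "Gx G j i n (Fm k i n y) = \<alpha> i j k n (Fm (inf k j) j n (Gx G (inf k j) k n y))"
  using assms unfolding weak_mackey_def by blast

lemma weak_mackey_transfer_self:
  assumes wm: "weak_mackey F Fm G \<alpha> \<beta>" and ji: "j < i" and x: "x \<in> sx (F j) n"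
  shows "G j i n (Fm j i n x) = \<alpha> i j j n x"
  using weak_mackey_formula[OF wm ji ji x] sfunctor_id[OF weak_mackey_sfunctor[OF wm] x]
    less_imp_neq[OF ji] by (simp add: Gx_def)

lemma quasi_unit_saut: "quasi_unit F \<alpha> \<Longrightarrow> j < i \<Longrightarrow> is_saut (F j) (\<alpha> i j j)"
  unfolding quasi_unit_def by blast

lemma weak_mackey_quasi_unit_transfer_self_inj:
  assumes wm: "weak_mackey F Fm G \<alpha> \<beta>" and qu: "quasi_unit F \<alpha>" and ji: "j < i"
    and x: "x \<in> sx (F j) n" and x': "x' \<in> sx (F j) n"
    and "G j i n (Fm j i n x) = G j i n (Fm j i n x')"
  shows "x = x'"
  using assms weak_mackey_transfer_self[OF wm ji] inj_onD[OF saut_inj_on[OF quasi_unit_saut[OF qu ji]]]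
  by metis

lemma weak_mackey_quasi_unit_inj:
  assumes "weak_mackey F Fm G \<alpha> \<beta>" "quasi_unit F \<alpha>" "j < i"
  shows "inj_on (Fm j i n) (sx (F j) n)"
  using weak_mackey_quasi_unit_transfer_self_inj[OF assms] by (auto intro: inj_onI)

lemma weak_mackey_quasi_unit_meet_image:
  fixes F :: "'p::semilattice_inf \<Rightarrow> 'a sset"
  assumes wm: "weak_mackey F Fm G \<alpha> \<beta>" and qu: "quasi_unit F \<alpha>"
    and ji: "j < i" and ki: "k < i" and x: "x \<in> sx (F j) n" and y: "y \<in> sx (F k) n"
    and xy: "Fm j i n x = Fm k i n y"
  shows "x \<in> Fm (inf k j) j n ` sx (F (inf k j)) n"
proof -
  have sf: "is_sfunctor F Fm" using wm by (rule weak_mackey_sfunctor)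
  define m where "m = inf k j"
  have mj: "m \<le> j" and mk: "m \<le> k" unfolding m_def by auto
  consider "m = j" | "m = k" "m < j" | "m < j" "m < k"
    using mj mk by fastforce
  then show ?thesis
  proof cases
    case 1
    then show ?thesis using x sfunctor_id[OF sf x] unfolding m_def by force
  next
    case 2
    have "Fm j i n (Fm k j n y) = Fm j i n x"
      using sfunctor_comp[OF sf _ _ y, of j i] 2 mj ji xy by simp
    then have "x = Fm k j n y"
      using weak_mackey_quasi_unit_inj[OF wm qu ji] sfunctor_map_in[OF sf _ y, of j] 2 mj x
      by (auto dest: inj_onD)
    then show ?thesis using y 2 unfolding m_def by force
  next
    case 3
    txt \<open>Replace \<open>y\<close> by \<open>y' = F(m<k) w\<close>, where \<open>\<alpha>(k,m,m) w = G(m<k) y\<close>: then \<open>y\<close> and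
      \<open>y'\<close> have the same transfer to \<open>F(m)\<close>, hence by the Mackey formula the same
      transfer \<open>G(j<i) F(k<i)\<close>, and \<open>F(k<i) y'\<close> visibly lies in the image of \<open>F(j<i)\<close>.\<close>
    have u: "G m k n y \<in> sx (F m) n"
      using weak_mackey_transfer_in[OF wm \<open>m < k\<close> y] .
    obtain w where w: "w \<in> sx (F m) n" and wu: "\<alpha> k m m n w = G m k n y"
      using saut_surj_on[OF quasi_unit_saut[OF qu \<open>m < k\<close>] u] by blast
    define y' where "y' = Fm m k n w"
    have y': "y' \<in> sx (F k) n" unfolding y'_def using sfunctor_map_in[OF sf mk w] .
    have "G m k n y' = G m k n y"
      using weak_mackey_transfer_self[OF wm \<open>m < k\<close> w] wu unfolding y'_def by simp
    then have "Gx G j i n (Fm k i n y') = Gx G j i n (Fm k i n y)"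
      using weak_mackey_formula[OF wm ji ki y] weak_mackey_formula[OF wm ji ki y']
        less_imp_neq[OF \<open>m < k\<close>] unfolding m_def by (simp add: Gx_def)
    moreover have "Fm k i n y' = Fm j i n (Fm m j n w)"
      using sfunctor_comp[OF sf mk _ w, of i] sfunctor_comp[OF sf mj _ w, of i] ji ki
      unfolding y'_def by simp
    ultimately have "G j i n (Fm j i n (Fm m j n w)) = G j i n (Fm j i n x)"
      using xy less_imp_neq[OF ji] by (simp add: Gx_def)
    then have "x = Fm m j n w"
      using weak_mackey_quasi_unit_transfer_self_inj[OF wm qu ji x sfunctor_map_in[OF sf mj w]] by simp
    then show ?thesis using w unfolding m_def by blast
  qed
qed

theorem lemma3p8:
  fixes d :: "'p::semilattice_inf \<Rightarrow> nat"
    and F :: "'p \<Rightarrow> 'a sset"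
    and Fm G :: "'p \<Rightarrow> 'p \<Rightarrow> nat \<Rightarrow> 'a \<Rightarrow> 'a"
  assumes "filtration d"
    and "\<exists>\<alpha> \<beta>. weak_mackey F Fm G \<alpha> \<beta> \<and> quasi_unit F \<alpha>"
  shows "reedy_cofibrant F Fm"
proof -
  obtain \<alpha> \<beta> where wm: "weak_mackey F Fm G \<alpha> \<beta>" and qu: "quasi_unit F \<alpha>"
    using assms(2) by blast
  show ?thesis
  proof (rule reedy_cofibrant_if_inj_meet_images)
    show "is_sfunctor F Fm" using wm by (rule weak_mackey_sfunctor)
  next
    show "inj_on (Fm j i n) (sx (F j) n)" if "j < i" for j i n
      using weak_mackey_quasi_unit_inj[OF wm qu that] .
  next
    show "x \<in> Fm (inf k j) j n ` sx (F (inf k j)) n"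
      if "j < i" "k < i" "x \<in> sx (F j) n" "y \<in> sx (F k) n" "Fm j i n x = Fm k i n y"
      for i j k n x y
      using weak_mackey_quasi_unit_meet_image[OF wm qu that] .
  qed
qed

end
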